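(* Let $P,Q$ be finite posets and $R$ an indecomposable commutative unital ring. Then every $R$-linear algebra isomorphism $\Phi:I^3(P,R)\to I^3(Q,R)$ is of the form $\widehat\varphi$ for some poset isomorphism $\varphi:P\to Q$, where $\widehat\varphi$ is the $R$-linear map determined by $\widehat\varphi(e_{xyz})=e_{\varphi(x)\varphi(y)\varphi(z)}$ for all $x\le y\le z$ in $P$.
   Context: A commutative ring $R$ is indecomposable if its only idempotents are $0$ and $1$. For a finite poset $P$, let $P^3_\le=\{(x,y,z)\in P^3: x\le y\le z\}$. The third partial flag incidence algebra $I^3(P,R)$ is the $R$-module of all functions $f:P^3_\le\to R$ (pointwise operations) with the (non-associative) multiplication $(fg)(x_1,x_2,x_3)=\sum f(x_1,y_1,y_2)\,g(y_1,y_2,x_3)$, the sum over all $y_1,y_2$ with $x_1\le y_1\le x_2\le y_2\le x_3$. For $x\le y\le z$ in $P$, $e_{xyz}\in I^3(P,R)$ is the function taking value $1$ at $(x,y,z)$ and $0$ elsewhere; these form a basis of $I^3(P,R)$. *)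

theory Defs
  imports Main
begin

text \<open>The third partial flag incidence algebra I^3(P,R): functions on P^3 that
vanish outside the chains x <= y <= z (so they are exactly functions on P^3_<=).\<close>

definition I3 :: "('a::order \<times> 'a \<times> 'a \<Rightarrow> 'r::zero) set" where
  "I3 = {f. \<forall>x y z. \<not> (x \<le> y \<and> y \<le> z) \<longrightarrow> f (x, y, z) = 0}"

definition I3_mult ::
  "('a::{finite,order} \<times> 'a \<times> 'a \<Rightarrow> 'r::comm_ring_1)
   \<Rightarrow> ('a \<times> 'a \<times> 'a \<Rightarrow> 'r) \<Rightarrow> ('a \<times> 'a \<times> 'a \<Rightarrow> 'r)" where
  "I3_mult f g = (\<lambda>(x1, x2, x3).
     if x1 \<le> x2 \<and> x2 \<le> x3 then
       (\<Sum>(y1, y2) \<in> {(y1, y2). x1 \<le> y1 \<and> y1 \<le> x2 \<and> x2 \<le> y2 \<and> y2 \<le> x3}.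
          f (x1, y1, y2) * g (y1, y2, x3))
     else 0)"

definition I3_e :: "'a \<Rightarrow> 'a \<Rightarrow> 'a \<Rightarrow> ('a \<times> 'a \<times> 'a \<Rightarrow> 'r::{zero,one})" where
  "I3_e x y z = (\<lambda>t. if t = (x, y, z) then 1 else 0)"

definition indecomposable_ring :: "'r::comm_ring_1 itself \<Rightarrow> bool" where
  "indecomposable_ring _ \<longleftrightarrow> ((0::'r) \<noteq> 1 \<and> (\<forall>e::'r. e * e = e \<longrightarrow> e = 0 \<or> e = 1))"

definition poset_iso :: "('a::order \<Rightarrow> 'b::order) \<Rightarrow> bool" where
  "poset_iso \<phi> \<longleftrightarrow> bij \<phi> \<and> (\<forall>x y. x \<le> y \<longleftrightarrow> \<phi> x \<le> \<phi> y)"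

end

theory Submission
  imports Defs
begin

text \<open>
  Evaluation at a diagonal point \<open>(q, q, q)\<close> is multiplicative. On the images
  \<open>eps x = \<Phi> e_xxx\<close> of the orthogonal diagonal idempotents it therefore takes only the values 0 and 1
  (\<open>R\<close> is indecomposable), and it kills the images of all non-diagonal basis elements. Surjectivity
  of \<open>\<Phi>\<close> then attaches to every \<open>q\<close> a unique \<open>x\<close> with \<open>eps x (q, q, q) = 1\<close>.
  Sandwiching \<open>\<Phi> e_abc\<close> between a preimage of \<open>e_rqq\<close> and \<open>eps y\<close> shows that \<open>\<Phi> e_abc\<close> vanishes
  except at points whose first and last coordinates are attached to \<open>a\<close> and \<open>c\<close>. This gives a
  bijection \<open>\<phi>\<close> with \<open>eps x = e_\<phi>x\<phi>x\<phi>x\<close>, and it makes \<open>\<Phi> e_aac\<close> and \<open>\<Phi> e_acc\<close> scalar multiples of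
  basis elements. The identity \<open>e_aac \<cdot> e_acc = (\<Sum>s\<in>{a..c}. e_asc)\<close> forces both scalars to be the
  same nonzero idempotent, hence 1. The factorization \<open>e_abc = e_abb \<cdot> e_bbc\<close> handles all other
  basis elements. Finally, \<open>\<phi>\<close> reflects the order because \<open>e_\<phi>a\<phi>a\<phi>c\<close> has a preimage under \<open>\<Phi>\<close>.
\<close>

lemma sum_eq_single:
  assumes "finite S" "\<And>s. s \<in> S \<Longrightarrow> s \<noteq> a \<Longrightarrow> f s = 0"
  shows "sum f S = (if a \<in> S then f a else 0)"
proof -
  have "sum f S = (\<Sum>s\<in>S. if s = a then f a else 0)"
    using assms(2) by (intro sum.cong) auto
  then show ?thesis
    using assms(1) by simp
qed

definition chains3 :: "('a::order \<times> 'a \<times> 'a) set" where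
  "chains3 = {(x, y, z). x \<le> y \<and> y \<le> z}"

lemma I3_vanish: "f \<in> I3 \<Longrightarrow> \<not> (x \<le> y \<and> y \<le> z) \<Longrightarrow> f (x, y, z) = 0"
  by (auto simp: I3_def)

lemma I3_e_in_I3: "x \<le> y \<Longrightarrow> y \<le> z \<Longrightarrow> I3_e x y z \<in> I3"
  by (auto simp: I3_def I3_e_def)

lemma I3_mult_in_I3: "I3_mult f g \<in> I3"
  by (auto simp: I3_def I3_mult_def)

lemma I3_zero_in_I3: "(\<lambda>t. 0) \<in> I3"
  by (auto simp: I3_def)

lemma I3_smult_in_I3: "f \<in> I3 \<Longrightarrow> (\<lambda>t. r * f t :: 'r::mult_zero) \<in> I3"
  by (auto simp: I3_def)

lemma I3_sum_in_I3:
  "(\<And>s. s \<in> S \<Longrightarrow> g s \<in> I3) \<Longrightarrow> (\<lambda>t. \<Sum>s\<in>S. g s t :: 'r::comm_monoid_add) \<in> I3"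
  by (auto simp: I3_def intro!: sum.neutral)

lemma I3_e_neq_zero: "(0::'r::{zero,one}) \<noteq> 1 \<Longrightarrow> I3_e x y z \<noteq> (\<lambda>t. 0 :: 'r)"
  by (metis I3_e_def)

lemma I3_e_eq_iff:
  assumes "(0::'r::{zero,one}) \<noteq> 1"
  shows "I3_e x y z = (I3_e x' y' z' :: _ \<Rightarrow> 'r) \<longleftrightarrow> (x, y, z) = (x', y', z')"
proof
  assume "I3_e x y z = (I3_e x' y' z' :: _ \<Rightarrow> 'r)"
  then have "I3_e x y z (x, y, z) = (I3_e x' y' z' (x, y, z) :: 'r)"
    by simp
  then show "(x, y, z) = (x', y', z')"
    using assms by (simp add: I3_e_def split: if_splits)
qed simp

lemma I3_eq_smult_e:
  assumes "\<And>t. f t \<noteq> 0 \<Longrightarrow> t = (x, y, z)"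
  shows "f = (\<lambda>t. f (x, y, z) * I3_e x y z t :: 'r::{mult_zero,monoid_mult})"
proof
  fix t
  show "f t = f (x, y, z) * I3_e x y z t"
    using assms[of t] by (auto simp: I3_e_def)
qed

lemma I3_expansion:
  fixes f :: "'a::{finite,order} \<times> 'a \<times> 'a \<Rightarrow> 'r::comm_ring_1"
  assumes "f \<in> I3"
  shows "f t = (\<Sum>(x, y, z)\<in>chains3. f (x, y, z) * I3_e x y z t)"
proof -
  obtain a b c where t: "t = (a, b, c)" by (cases t)
  have "(\<Sum>(x, y, z)\<in>chains3. f (x, y, z) * I3_e x y z t) = (if t \<in> chains3 then f t else 0)"
    by (subst sum_eq_single[where a = t]) (auto simp: I3_e_def)
  then show ?thesis
    using assms by (auto simp: chains3_def t I3_def)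
qed

lemma I3_mult_diag: "I3_mult f g (q, q, q) = f (q, q, q) * g (q, q, q)"
proof -
  have "{(y1, y2). q \<le> y1 \<and> y1 \<le> q \<and> q \<le> y2 \<and> y2 \<le> q} = {(q, q)}"
    by (auto intro: order.antisym)
  then show ?thesis
    by (simp add: I3_mult_def)
qed

lemma I3_mult_smult:
  "I3_mult (\<lambda>t. r * f t) (\<lambda>t. s * g t) = (\<lambda>t. (r * s) * I3_mult f g t)"
  by (auto simp: I3_mult_def sum_distrib_left ac_simps intro!: ext sum.cong)

section \<open>Multiplication by basis elements\<close>

lemma I3_mult_e_left:
  fixes g :: "'a::{finite,order} \<times> 'a \<times> 'a \<Rightarrow> 'r::comm_ring_1"
  assumes "g \<in> I3"
  shows "I3_mult (I3_e a b c) g (x1, x2, x3) =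
    (if x1 = a \<and> a \<le> b \<and> b \<le> x2 \<and> x2 \<le> c then g (b, c, x3) else 0)"
proof -
  let ?Y = "{(y1, y2). x1 \<le> y1 \<and> y1 \<le> x2 \<and> x2 \<le> y2 \<and> y2 \<le> x3}"
  have "(\<Sum>(y1, y2)\<in>?Y. I3_e a b c (x1, y1, y2) * g (y1, y2, x3)) =
      (if (b, c) \<in> ?Y then I3_e a b c (x1, b, c) * g (b, c, x3) else 0)"
    by (subst sum_eq_single[where a = "(b, c)"]) (auto simp: I3_e_def split: if_splits)
  then have prod_eq: "I3_mult (I3_e a b c) g (x1, x2, x3) = (if x1 \<le> x2 \<and> x2 \<le> x3 then
      (if (b, c) \<in> ?Y then I3_e a b c (x1, b, c) * g (b, c, x3) else 0) else 0)"
    by (simp only: I3_mult_def prod.case)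
  have "g (b, c, x3) = 0" if "\<not> c \<le> x3"
    using I3_vanish[OF assms] that by blast
  then show ?thesis
    unfolding prod_eq by (auto simp: I3_e_def intro: order_trans)
qed

lemma I3_mult_e_right:
  fixes f :: "'a::{finite,order} \<times> 'a \<times> 'a \<Rightarrow> 'r::comm_ring_1"
  assumes "f \<in> I3"
  shows "I3_mult f (I3_e a b c) (x1, x2, x3) =
    (if x3 = c \<and> a \<le> x2 \<and> x2 \<le> b \<and> b \<le> c then f (x1, a, b) else 0)"
proof -
  let ?Y = "{(y1, y2). x1 \<le> y1 \<and> y1 \<le> x2 \<and> x2 \<le> y2 \<and> y2 \<le> x3}"
  have "(\<Sum>(y1, y2)\<in>?Y. f (x1, y1, y2) * I3_e a b c (y1, y2, x3)) =
      (if (a, b) \<in> ?Y then f (x1, a, b) * I3_e a b c (a, b, x3) else 0)"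
    by (subst sum_eq_single[where a = "(a, b)"]) (auto simp: I3_e_def split: if_splits)
  then have prod_eq: "I3_mult f (I3_e a b c) (x1, x2, x3) = (if x1 \<le> x2 \<and> x2 \<le> x3 then
      (if (a, b) \<in> ?Y then f (x1, a, b) * I3_e a b c (a, b, x3) else 0) else 0)"
    by (simp only: I3_mult_def prod.case)
  have "f (x1, a, b) = 0" if "\<not> x1 \<le> a"
    using I3_vanish[OF assms] that by blast
  then show ?thesis
    unfolding prod_eq by (auto simp: I3_e_def intro: order_trans)
qed

lemma I3_mult_e_e:
  assumes "a \<le> b" "b \<le> c" "c \<le> d"
  shows "I3_mult (I3_e a b c) (I3_e b c d) = (\<lambda>t. \<Sum>s\<in>{b..c}. I3_e a s d t :: 'r::comm_ring_1)"
proof (intro ext, clarify)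
  fix x1 x2 x3 :: 'a
  have "(\<Sum>s\<in>{b..c}. I3_e a s d (x1, x2, x3) :: 'r) = (if x2 \<in> {b..c} then I3_e a x2 d (x1, x2, x3) else 0)"
    by (rule sum_eq_single) (auto simp: I3_e_def)
  then show "I3_mult (I3_e a b c) (I3_e b c d) (x1, x2, x3) = (\<Sum>s\<in>{b..c}. I3_e a s d (x1, x2, x3) :: 'r)"
    using assms by (simp add: I3_mult_e_left I3_e_in_I3) (auto simp: I3_e_def)
qed

lemma I3_mult_e_e_join:
  assumes "a \<le> b" "b \<le> c"
  shows "I3_mult (I3_e a b b) (I3_e b b c) = (I3_e a b c :: _ \<Rightarrow> 'r::comm_ring_1)"
  using I3_mult_e_e[OF assms(1) order_refl assms(2)] by simp

lemma I3_mult_e_e_mismatch: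
  assumes "(b, c) \<noteq> (a', b')" "a' \<le> b'" "b' \<le> c'"
  shows "I3_mult (I3_e a b c) (I3_e a' b' c') = (\<lambda>t. 0 :: 'r::comm_ring_1)"
proof (intro ext, clarify)
  fix x1 x2 x3 :: 'a
  show "I3_mult (I3_e a b c) (I3_e a' b' c') (x1, x2, x3) = (0 :: 'r)"
    using assms by (simp add: I3_mult_e_left I3_e_in_I3) (auto simp: I3_e_def)
qed

lemma I3_mult_e_mult_e_diag:
  fixes h :: "'a::{finite,order} \<times> 'a \<times> 'a \<Rightarrow> 'r::comm_ring_1"
  assumes "c \<noteq> y" "h \<in> I3"
  shows "I3_mult (I3_e a b c) (I3_mult h (I3_e y y y)) = (\<lambda>t. 0)"
  using assms
  by (intro ext, clarify) (simp add: I3_mult_e_left I3_mult_in_I3 I3_mult_e_right, metis order.antisym)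

lemma I3_mult_mult_e_diag_e:
  fixes h :: "'a::{finite,order} \<times> 'a \<times> 'a \<Rightarrow> 'r::comm_ring_1"
  assumes "a \<noteq> y" "h \<in> I3"
  shows "I3_mult (I3_mult (I3_e y y y) h) (I3_e a b c) = (\<lambda>t. 0)"
  using assms
  by (intro ext, clarify) (simp add: I3_mult_e_right I3_mult_in_I3 I3_mult_e_left, metis order.antisym)

lemma I3_mult_nested_e_right:
  fixes F H :: "'a::{finite,order} \<times> 'a \<times> 'a \<Rightarrow> 'r::comm_ring_1"
  assumes "F \<in> I3" "H \<in> I3"
  shows "I3_mult F (I3_mult (I3_e p q q) H) (x, q, q) = F (x, p, q) * H (q, q, q)"
proof -
  let ?G = "I3_mult (I3_e p q q) H"
  let ?Y = "{(y1, y2). x \<le> y1 \<and> y1 \<le> q \<and> q \<le> y2 \<and> y2 \<le> q}"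
  have G: "?G (y1, y2, y3) = (if y1 = p \<and> p \<le> q \<and> q \<le> y2 \<and> y2 \<le> q then H (q, q, y3) else 0)"
    for y1 y2 y3 using I3_mult_e_left[OF assms(2)] by simp
  have "(\<Sum>(y1, y2)\<in>?Y. F (x, y1, y2) * ?G (y1, y2, q)) =
      (if (p, q) \<in> ?Y then F (x, p, q) * ?G (p, q, q) else 0)"
    by (subst sum_eq_single[where a = "(p, q)"]) (auto simp: G intro: order.antisym split: if_splits)
  then have prod_eq: "I3_mult F ?G (x, q, q) = (if x \<le> q \<and> q \<le> q then
      (if (p, q) \<in> ?Y then F (x, p, q) * ?G (p, q, q) else 0) else 0)"
    by (simp only: I3_mult_def prod.case)
  have "F (x, p, q) = 0" if "\<not> (x \<le> p \<and> p \<le> q)"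
    using I3_vanish[OF assms(1)] that by blast
  then show ?thesis
    unfolding prod_eq by (auto simp: G intro: order_trans)
qed

lemma I3_mult_nested_e_left:
  fixes F H :: "'a::{finite,order} \<times> 'a \<times> 'a \<Rightarrow> 'r::comm_ring_1"
  assumes "F \<in> I3" "H \<in> I3"
  shows "I3_mult (I3_mult H (I3_e p p q)) F (p, p, z) = H (p, p, p) * F (p, q, z)"
proof -
  let ?G = "I3_mult H (I3_e p p q)"
  let ?Y = "{(y1, y2). p \<le> y1 \<and> y1 \<le> p \<and> p \<le> y2 \<and> y2 \<le> z}"
  have G: "?G (y1, y2, y3) = (if y3 = q \<and> p \<le> y2 \<and> y2 \<le> p \<and> p \<le> q then H (y1, p, p) else 0)"
    for y1 y2 y3 using I3_mult_e_right[OF assms(2)] by simp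
  have "(\<Sum>(y1, y2)\<in>?Y. ?G (p, y1, y2) * F (y1, y2, z)) =
      (if (p, q) \<in> ?Y then ?G (p, p, q) * F (p, q, z) else 0)"
    by (subst sum_eq_single[where a = "(p, q)"]) (auto simp: G intro: order.antisym split: if_splits)
  then have prod_eq: "I3_mult ?G F (p, p, z) = (if p \<le> p \<and> p \<le> z then
      (if (p, q) \<in> ?Y then ?G (p, p, q) * F (p, q, z) else 0) else 0)"
    by (simp only: I3_mult_def prod.case)
  have "F (p, q, z) = 0" if "\<not> (p \<le> q \<and> q \<le> z)"
    using I3_vanish[OF assms(1)] that by blast
  then show ?thesis
    unfolding prod_eq by (auto simp: G intro: order_trans)
qed

locale I3_iso =
  fixes \<Phi> :: "('a::{finite,order} \<times> 'a \<times> 'a \<Rightarrow> 'r::comm_ring_1)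
               \<Rightarrow> ('b::{finite,order} \<times> 'b \<times> 'b \<Rightarrow> 'r)"
  assumes indec: "indecomposable_ring TYPE('r)"
    and bij: "bij_betw \<Phi> I3 I3"
    and add: "\<And>f g. f \<in> I3 \<Longrightarrow> g \<in> I3 \<Longrightarrow> \<Phi> (\<lambda>t. f t + g t) = (\<lambda>t. \<Phi> f t + \<Phi> g t)"
    and smult: "\<And>r f. f \<in> I3 \<Longrightarrow> \<Phi> (\<lambda>t. r * f t) = (\<lambda>t. r * \<Phi> f t)"
    and mult: "\<And>f g. f \<in> I3 \<Longrightarrow> g \<in> I3 \<Longrightarrow> \<Phi> (I3_mult f g) = I3_mult (\<Phi> f) (\<Phi> g)"
begin

lemma zero_neq_one: "(0::'r) \<noteq> 1"
  using indec by (simp add: indecomposable_ring_def)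

lemma idempotent_cases: "(v::'r) * v = v \<Longrightarrow> v = 0 \<or> v = 1"
  using indec by (simp add: indecomposable_ring_def)

lemma Phi_in_I3: "f \<in> I3 \<Longrightarrow> \<Phi> f \<in> I3"
  using bij by (auto simp: bij_betw_def)

lemma Phi_eq_iff: "f \<in> I3 \<Longrightarrow> g \<in> I3 \<Longrightarrow> \<Phi> f = \<Phi> g \<longleftrightarrow> f = g"
  using bij by (auto simp: bij_betw_def inj_on_def)

lemma Phi_preimage:
  assumes "g \<in> I3"
  obtains f where "f \<in> I3" "\<Phi> f = g"
  using assms bij by (metis bij_betw_def imageE)

lemma Phi_zero: "\<Phi> (\<lambda>t. 0) = (\<lambda>t. 0)"
  using smult[of "\<lambda>t. 0" 0] by (simp add: I3_zero_in_I3)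

lemma Phi_e_neq_zero: "a \<le> b \<Longrightarrow> b \<le> c \<Longrightarrow> \<Phi> (I3_e a b c) \<noteq> (\<lambda>t. 0)"
  using Phi_eq_iff[OF I3_e_in_I3 I3_zero_in_I3] Phi_zero I3_e_neq_zero[OF zero_neq_one] by metis

lemma Phi_sum:
  assumes "finite S" "\<And>s. s \<in> S \<Longrightarrow> g s \<in> I3"
  shows "\<Phi> (\<lambda>t. \<Sum>s\<in>S. g s t) = (\<lambda>t. \<Sum>s\<in>S. \<Phi> (g s) t)"
  using assms
proof (induction S rule: finite_induct)
  case empty
  then show ?case by (simp add: Phi_zero)
next
  case (insert x S)
  then have "\<Phi> (\<lambda>t. \<Sum>s\<in>insert x S. g s t) = \<Phi> (\<lambda>t. g x t + (\<Sum>s\<in>S. g s t))"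
    by simp
  also have "\<dots> = (\<lambda>t. \<Phi> (g x) t + \<Phi> (\<lambda>t. \<Sum>s\<in>S. g s t) t)"
    using insert by (intro add) (auto intro: I3_sum_in_I3)
  finally show ?case
    using insert by simp
qed

lemma Phi_expansion:
  assumes "h \<in> I3"
  shows "\<Phi> h t = (\<Sum>(x, y, z)\<in>chains3. h (x, y, z) * \<Phi> (I3_e x y z) t)"
proof -
  let ?g = "\<lambda>s t. case s of (x, y, z) \<Rightarrow> h (x, y, z) * I3_e x y z t"
  have "\<Phi> h = \<Phi> (\<lambda>t. \<Sum>s\<in>chains3. ?g s t)"
    by (rule arg_cong[where f = \<Phi>], rule ext, rule I3_expansion[OF assms])
  also have "\<dots> = (\<lambda>t. \<Sum>s\<in>chains3. \<Phi> (?g s) t)"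
    by (rule Phi_sum) (auto simp: chains3_def intro!: I3_smult_in_I3 I3_e_in_I3)
  finally have "\<Phi> h t = (\<Sum>s\<in>chains3. \<Phi> (?g s) t)"
    by simp
  also have "\<dots> = (\<Sum>(x, y, z)\<in>chains3. h (x, y, z) * \<Phi> (I3_e x y z) t)"
    by (rule sum.cong) (auto simp: chains3_def smult I3_e_in_I3)
  finally show ?thesis .
qed

section \<open>Diagonal idempotents\<close>

definition eps :: "'a \<Rightarrow> 'b \<times> 'b \<times> 'b \<Rightarrow> 'r" where
  "eps x = \<Phi> (I3_e x x x)"

lemma eps_in_I3: "eps x \<in> I3"
  by (simp add: eps_def Phi_in_I3 I3_e_in_I3)

lemma eps_mult_eps: "I3_mult (eps x) (eps y) = (if x = y then eps x else (\<lambda>t. 0))"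
  by (simp add: eps_def mult[symmetric] I3_e_in_I3 I3_mult_e_e_join I3_mult_e_e_mismatch Phi_zero)

lemma eps_diag_cases: "eps x (q, q, q) = 0 \<or> eps x (q, q, q) = 1"
  by (rule idempotent_cases) (metis eps_mult_eps I3_mult_diag)

lemma eps_diag_orth: "eps x (q, q, q) = 1 \<Longrightarrow> y \<noteq> x \<Longrightarrow> eps y (q, q, q) = 0"
  by (metis eps_mult_eps I3_mult_diag eps_diag_cases mult_1)

lemma Phi_e_aac_diag:
  assumes "a < c"
  shows "\<Phi> (I3_e a a c) (q, q, q) = 0"
proof -
  have "\<Phi> (I3_e a a c) (q, q, q) = I3_mult (eps a) (\<Phi> (I3_e a a c)) (q, q, q)"
    using assms by (simp add: eps_def mult[symmetric] I3_e_in_I3 I3_mult_e_e_join)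
  also have "\<dots> = I3_mult (\<Phi> (I3_e a a c)) (eps a) (q, q, q)"
    by (simp add: I3_mult_diag mult.commute)
  also have "\<dots> = 0"
    using assms by (simp add: eps_def mult[symmetric] I3_e_in_I3 I3_mult_e_e_mismatch Phi_zero)
  finally show ?thesis .
qed

lemma Phi_e_acc_diag:
  assumes "a < c"
  shows "\<Phi> (I3_e a c c) (q, q, q) = 0"
proof -
  have "\<Phi> (I3_e a c c) (q, q, q) = I3_mult (\<Phi> (I3_e a c c)) (eps c) (q, q, q)"
    using assms by (simp add: eps_def mult[symmetric] I3_e_in_I3 I3_mult_e_e_join)
  also have "\<dots> = I3_mult (eps c) (\<Phi> (I3_e a c c)) (q, q, q)"
    by (simp add: I3_mult_diag mult.commute)
  also have "\<dots> = 0"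
    using assms by (simp add: eps_def mult[symmetric] I3_e_in_I3 I3_mult_e_e_mismatch Phi_zero)
  finally show ?thesis .
qed

lemma Phi_e_diag_vanish:
  assumes "a \<le> b" "b \<le> c" "a \<noteq> c"
  shows "\<Phi> (I3_e a b c) (q, q, q) = 0"
proof -
  consider "a = b" "a < c" | "b = c" "a < c" | "a < b" "b < c"
    using assms by (auto simp: order.order_iff_strict)
  then show ?thesis
  proof cases
    case 3
    then have "\<Phi> (I3_e a b c) = I3_mult (\<Phi> (I3_e a b b)) (\<Phi> (I3_e b b c))"
      by (simp add: mult[symmetric] I3_e_in_I3 I3_mult_e_e_join)
    then show ?thesis
      using 3 by (simp add: I3_mult_diag Phi_e_acc_diag)
  qed (simp_all add: Phi_e_aac_diag Phi_e_acc_diag)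
qed

lemma Phi_diag_expansion:
  assumes "h \<in> I3"
  shows "\<Phi> h (q, q, q) = (\<Sum>x\<in>UNIV. h (x, x, x) * eps x (q, q, q))"
proof -
  have "\<Phi> h (q, q, q) = (\<Sum>(x, y, z)\<in>chains3. h (x, y, z) * \<Phi> (I3_e x y z) (q, q, q))"
    by (rule Phi_expansion[OF assms])
  also have "\<dots> = (\<Sum>(x, y, z)\<in>(\<lambda>x. (x, x, x)) ` UNIV. h (x, y, z) * \<Phi> (I3_e x y z) (q, q, q))"
  proof (rule sum.mono_neutral_right)
    show "\<forall>s\<in>chains3 - range (\<lambda>x. (x, x, x)).
        (case s of (x, y, z) \<Rightarrow> h (x, y, z) * \<Phi> (I3_e x y z) (q, q, q)) = 0"
    proof (clarify)
      fix x y z :: 'a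
      assume "(x, y, z) \<in> chains3" "(x, y, z) \<notin> range (\<lambda>x. (x, x, x))"
      then have "x \<le> y" "y \<le> z" "x \<noteq> z"
        by (auto simp: chains3_def dest: order.antisym)
      then show "h (x, y, z) * \<Phi> (I3_e x y z) (q, q, q) = 0"
        by (simp add: Phi_e_diag_vanish)
    qed
  qed (auto simp: chains3_def)
  also have "\<dots> = (\<Sum>x\<in>UNIV. h (x, x, x) * eps x (q, q, q))"
    by (subst sum.reindex) (auto simp: inj_on_def eps_def)
  finally show ?thesis .
qed

lemma eps_diag_exists_index: "\<exists>x. eps x (q, q, q) = 1"
proof (rule ccontr)
  assume "\<nexists>x. eps x (q, q, q) = 1"
  then have zero: "eps x (q, q, q) = 0" for x
    using eps_diag_cases by blast
  obtain h where h: "h \<in> I3" "\<Phi> h = I3_e q q q"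
    using Phi_preimage I3_e_in_I3 by blast
  have "(1::'r) = \<Phi> h (q, q, q)"
    using h(2) by (simp add: I3_e_def)
  also have "\<dots> = 0"
    using Phi_diag_expansion[OF h(1)] zero by simp
  finally show False
    using zero_neq_one by simp
qed

lemma Phi_diag_eval:
  assumes "eps x (q, q, q) = 1" "h \<in> I3"
  shows "\<Phi> h (q, q, q) = h (x, x, x)"
proof -
  have "\<Phi> h (q, q, q) = (\<Sum>y\<in>UNIV. h (y, y, y) * eps y (q, q, q))"
    by (rule Phi_diag_expansion[OF assms(2)])
  also have "\<dots> = h (x, x, x)"
    using assms(1) by (subst sum_eq_single[where a = x]) (auto dest: eps_diag_orth)
  finally show ?thesis .
qed

lemma eps_diag_unique:
  assumes "eps x (q, q, q) = 1" "eps x (q', q', q') = 1"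
  shows "q = q'"
proof -
  obtain h where h: "h \<in> I3" "\<Phi> h = I3_e q q q"
    using Phi_preimage I3_e_in_I3 by blast
  then have "I3_e q q q (q', q', q') = (I3_e q q q (q, q, q) :: 'r)"
    using Phi_diag_eval[OF assms(1)] Phi_diag_eval[OF assms(2)] by metis
  then show ?thesis
    using zero_neq_one by (auto simp: I3_e_def split: if_splits)
qed

section \<open>The induced order isomorphism\<close>

lemma Phi_e_nonzero_chain:
  assumes "a \<le> b" "b \<le> c" "\<Phi> (I3_e a b c) (p, r, q) \<noteq> 0"
  shows "p \<le> r" "r \<le> q"
  using assms I3_vanish[OF Phi_in_I3[OF I3_e_in_I3[OF assms(1,2)]]] by blast+

lemma Phi_e_last_coord:
  assumes "a \<le> b" "b \<le> c" "\<Phi> (I3_e a b c) (p, r, q) \<noteq> 0"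
  shows "eps c (q, q, q) = 1"
proof -
  obtain y where y: "eps y (q, q, q) = 1"
    using eps_diag_exists_index by blast
  obtain g where g: "g \<in> I3" "\<Phi> g = I3_e r q q"
    using Phi_preimage I3_e_in_I3 Phi_e_nonzero_chain[OF assms] by blast
  have "\<Phi> (I3_e a b c) (p, r, q) = I3_mult (\<Phi> (I3_e a b c)) (I3_mult (I3_e r q q) (eps y)) (p, q, q)"
    using assms y by (simp add: I3_mult_nested_e_right Phi_in_I3 I3_e_in_I3 eps_in_I3)
  also have "\<dots> = \<Phi> (I3_mult (I3_e a b c) (I3_mult g (I3_e y y y))) (p, q, q)"
    using assms g by (simp add: mult I3_e_in_I3 I3_mult_in_I3 eps_def)
  finally have factored:
      "\<Phi> (I3_e a b c) (p, r, q) = \<Phi> (I3_mult (I3_e a b c) (I3_mult g (I3_e y y y))) (p, q, q)" .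
  have "c = y"
  proof (rule ccontr)
    assume "c \<noteq> y"
    then have "\<Phi> (I3_e a b c) (p, r, q) = 0"
      using factored I3_mult_e_mult_e_diag[OF _ g(1)] by (simp add: Phi_zero)
    with assms(3) show False
      by simp
  qed
  with y show ?thesis
    by simp
qed

lemma Phi_e_first_coord:
  assumes "a \<le> b" "b \<le> c" "\<Phi> (I3_e a b c) (p, r, q) \<noteq> 0"
  shows "eps a (p, p, p) = 1"
proof -
  obtain y where y: "eps y (p, p, p) = 1"
    using eps_diag_exists_index by blast
  obtain g where g: "g \<in> I3" "\<Phi> g = I3_e p p r"
    using Phi_preimage I3_e_in_I3 Phi_e_nonzero_chain[OF assms] by blast
  have "\<Phi> (I3_e a b c) (p, r, q) = I3_mult (I3_mult (eps y) (I3_e p p r)) (\<Phi> (I3_e a b c)) (p, p, q)"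
    using assms y by (simp add: I3_mult_nested_e_left Phi_in_I3 I3_e_in_I3 eps_in_I3)
  also have "\<dots> = \<Phi> (I3_mult (I3_mult (I3_e y y y) g) (I3_e a b c)) (p, p, q)"
    using assms g by (simp add: mult I3_e_in_I3 I3_mult_in_I3 eps_def)
  finally have factored:
      "\<Phi> (I3_e a b c) (p, r, q) = \<Phi> (I3_mult (I3_mult (I3_e y y y) g) (I3_e a b c)) (p, p, q)" .
  have "a = y"
  proof (rule ccontr)
    assume "a \<noteq> y"
    then have "\<Phi> (I3_e a b c) (p, r, q) = 0"
      using factored I3_mult_mult_e_diag_e[OF _ g(1)] by (simp add: Phi_zero)
    with assms(3) show False
      by simp
  qed
  with y show ?thesis
    by simp
qed

lemma eps_diag_exists_point: "\<exists>q. eps x (q, q, q) = 1"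
proof -
  obtain t where "eps x t \<noteq> 0"
    using Phi_e_neq_zero[of x x x] by (auto simp: eps_def fun_eq_iff)
  then show ?thesis
    using Phi_e_last_coord[of x x x] by (cases t) (auto simp: eps_def)
qed

definition phi :: "'a \<Rightarrow> 'b" where
  "phi x = (THE q. eps x (q, q, q) = 1)"

lemma eps_diag_iff: "eps x (q, q, q) = 1 \<longleftrightarrow> q = phi x"
proof -
  obtain q0 where q0: "eps x (q0, q0, q0) = 1"
    using eps_diag_exists_point by blast
  then have "phi x = q0"
    unfolding phi_def by (rule the_equality) (use eps_diag_unique q0 in blast)
  then show ?thesis
    using eps_diag_unique q0 by blast
qed

lemma Phi_e_support_ends:
  assumes "a \<le> b" "b \<le> c" "\<Phi> (I3_e a b c) (p, r, q) \<noteq> 0"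
  shows "p = phi a" "q = phi c"
  using Phi_e_first_coord[OF assms] Phi_e_last_coord[OF assms] by (simp_all add: eps_diag_iff)

lemma Phi_e_diag: "\<Phi> (I3_e x x x) = I3_e (phi x) (phi x) (phi x)"
proof -
  have "\<Phi> (I3_e x x x) = (\<lambda>t. \<Phi> (I3_e x x x) (phi x, phi x, phi x) * I3_e (phi x) (phi x) (phi x) t)"
  proof (rule I3_eq_smult_e)
    fix t
    assume nz: "\<Phi> (I3_e x x x) t \<noteq> 0"
    obtain p r q where t: "t = (p, r, q)"
      by (cases t)
    have "p \<le> r" "r \<le> q" "p = phi x" "q = phi x"
      using Phi_e_nonzero_chain[of x x x p r q] Phi_e_support_ends[of x x x p r q] nz
      by (simp_all add: t)
    then show "t = (phi x, phi x, phi x)"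
      by (simp add: t order.antisym)
  qed
  moreover have "\<Phi> (I3_e x x x) (phi x, phi x, phi x) = 1"
    using eps_diag_iff by (simp add: eps_def)
  ultimately show ?thesis
    by simp
qed

lemma bij_phi: "bij phi"
proof (rule bijI)
  show "inj phi"
  proof (rule injI)
    fix x y
    assume "phi x = phi y"
    then have "\<Phi> (I3_e x x x) = \<Phi> (I3_e y y y)"
      by (simp add: Phi_e_diag)
    then have "I3_e x x x = (I3_e y y y :: _ \<Rightarrow> 'r)"
      by (simp add: Phi_eq_iff I3_e_in_I3)
    then show "x = y"
      by (simp add: I3_e_eq_iff[OF zero_neq_one])
  qed
  show "surj phi"
    using eps_diag_exists_index eps_diag_iff by (metis surjI)
qed

lemma phi_mono:
  assumes "a \<le> c"
  shows "phi a \<le> phi c"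
proof -
  obtain t where nz: "\<Phi> (I3_e a a c) t \<noteq> 0"
    using Phi_e_neq_zero[of a a c] assms by (auto simp: fun_eq_iff)
  obtain p r q where t: "t = (p, r, q)"
    by (cases t)
  show ?thesis
    using Phi_e_nonzero_chain[of a a c p r q] Phi_e_support_ends[of a a c p r q] nz assms
    by (auto simp: t intro: order_trans)
qed

lemma Phi_e_aac_support:
  assumes "a \<le> c" "\<Phi> (I3_e a a c) t \<noteq> 0"
  shows "t = (phi a, phi a, phi c)"
proof -
  obtain p r q where t: "t = (p, r, q)"
    by (cases t)
  have "\<Phi> (I3_e a a c) = I3_mult (I3_e (phi a) (phi a) (phi a)) (\<Phi> (I3_e a a c))"
    using assms by (simp add: mult[symmetric] I3_e_in_I3 I3_mult_e_e_join Phi_e_diag[symmetric])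
  then have "\<Phi> (I3_e a a c) t = I3_mult (I3_e (phi a) (phi a) (phi a)) (\<Phi> (I3_e a a c)) (p, r, q)"
    unfolding t by (rule fun_cong)
  also have "\<dots> = (if p = phi a \<and> phi a \<le> r \<and> r \<le> phi a then \<Phi> (I3_e a a c) (phi a, phi a, q) else 0)"
    using assms(1) by (simp add: I3_mult_e_left Phi_in_I3 I3_e_in_I3)
  finally have "r \<le> phi a" "phi a \<le> r"
    using assms(2) by (simp_all split: if_splits)
  then have "r = phi a"
    by (rule order.antisym)
  moreover have "p = phi a" "q = phi c"
    using Phi_e_support_ends[OF order_refl assms(1) assms(2)[unfolded t]] by blast+
  ultimately show ?thesis
    by (simp add: t)
qed

lemma Phi_e_acc_support:
  assumes "a \<le> c" "\<Phi> (I3_e a c c) t \<noteq> 0"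
  shows "t = (phi a, phi c, phi c)"
proof -
  obtain p r q where t: "t = (p, r, q)"
    by (cases t)
  have "\<Phi> (I3_e a c c) = I3_mult (\<Phi> (I3_e a c c)) (I3_e (phi c) (phi c) (phi c))"
    using assms by (simp add: mult[symmetric] I3_e_in_I3 I3_mult_e_e_join Phi_e_diag[symmetric])
  then have "\<Phi> (I3_e a c c) t = I3_mult (\<Phi> (I3_e a c c)) (I3_e (phi c) (phi c) (phi c)) (p, r, q)"
    unfolding t by (rule fun_cong)
  also have "\<dots> = (if q = phi c \<and> phi c \<le> r \<and> r \<le> phi c then \<Phi> (I3_e a c c) (p, phi c, phi c) else 0)"
    using assms(1) by (simp add: I3_mult_e_right Phi_in_I3 I3_e_in_I3)
  finally have "r \<le> phi c" "phi c \<le> r"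
    using assms(2) by (simp_all split: if_splits)
  then have "r = phi c"
    by (rule order.antisym)
  moreover have "p = phi a" "q = phi c"
    using Phi_e_support_ends[OF assms(1) order_refl assms(2)[unfolded t]] by blast+
  ultimately show ?thesis
    by (simp add: t)
qed

lemma Phi_e_support:
  assumes "a \<le> b" "b \<le> c" "\<Phi> (I3_e a b c) t \<noteq> 0"
  shows "t = (phi a, phi b, phi c)"
proof -
  consider "a = b" | "b = c" | "a < b" "b < c"
    using assms(1,2) by (auto simp: order.order_iff_strict)
  then show ?thesis
  proof cases
    case 3
    define L R where "L = \<Phi> (I3_e a b b) (phi a, phi b, phi b)"
      and "R = \<Phi> (I3_e b b c) (phi b, phi b, phi c)"
    have "\<Phi> (I3_e a b c) = I3_mult (\<Phi> (I3_e a b b)) (\<Phi> (I3_e b b c))"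
      using assms by (simp add: mult[symmetric] I3_e_in_I3 I3_mult_e_e_join)
    also have "\<dots> = I3_mult (\<lambda>t. L * I3_e (phi a) (phi b) (phi b) t) (\<lambda>t. R * I3_e (phi b) (phi b) (phi c) t)"
      using Phi_e_acc_support[of a b] Phi_e_aac_support[of b c] assms
      by (simp only: L_def R_def I3_eq_smult_e[symmetric])
    also have "\<dots> = (\<lambda>t. (L * R) * I3_e (phi a) (phi b) (phi c) t)"
      using assms by (simp add: I3_mult_smult I3_mult_e_e_join phi_mono)
    finally show ?thesis
      using assms(3) by (auto simp: I3_e_def split: if_splits)
  qed (use assms Phi_e_aac_support Phi_e_acc_support in blast)+
qed

lemma Phi_e_smult:
  assumes "a \<le> b" "b \<le> c"
  shows "\<Phi> (I3_e a b c) = (\<lambda>t. \<Phi> (I3_e a b c) (phi a, phi b, phi c) * I3_e (phi a) (phi b) (phi c) t)"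
  using Phi_e_support[OF assms] by (rule I3_eq_smult_e)

lemma Phi_e_edge_coeffs:
  assumes "a < c"
  shows "\<Phi> (I3_e a a c) (phi a, phi a, phi c) = 1" "\<Phi> (I3_e a c c) (phi a, phi c, phi c) = 1"
proof -
  define L R where "L = \<Phi> (I3_e a a c) (phi a, phi a, phi c)"
    and "R = \<Phi> (I3_e a c c) (phi a, phi c, phi c)"
  have ac: "a \<le> c"
    using assms by simp
  have sum_eq: "(\<lambda>t. \<Sum>s\<in>{a..c}. \<Phi> (I3_e a s c) t) =
      (\<lambda>t. (L * R) * (\<Sum>s\<in>{phi a..phi c}. I3_e (phi a) s (phi c) t))"
  proof -
    have "(\<lambda>t. \<Sum>s\<in>{a..c}. \<Phi> (I3_e a s c) t) = \<Phi> (\<lambda>t. \<Sum>s\<in>{a..c}. I3_e a s c t)"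
      by (rule Phi_sum[symmetric]) (auto intro: I3_e_in_I3)
    also have "\<dots> = \<Phi> (I3_mult (I3_e a a c) (I3_e a c c))"
      using ac by (simp add: I3_mult_e_e)
    also have "\<dots> = I3_mult (\<lambda>t. L * I3_e (phi a) (phi a) (phi c) t) (\<lambda>t. R * I3_e (phi a) (phi c) (phi c) t)"
      using ac Phi_e_smult[of a a c] Phi_e_smult[of a c c]
      by (simp add: mult I3_e_in_I3 L_def R_def)
    also have "\<dots> = (\<lambda>t. (L * R) * (\<Sum>s\<in>{phi a..phi c}. I3_e (phi a) s (phi c) t))"
      using ac by (simp add: I3_mult_smult I3_mult_e_e phi_mono)
    finally show ?thesis .
  qed
  have "(\<Sum>s\<in>{a..c}. \<Phi> (I3_e a s c) (phi a, phi a, phi c)) = L"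
    using ac by (subst sum_eq_single[where a = a])
      (auto simp: L_def bij_phi bij_is_inj inj_eq dest: Phi_e_support)
  with fun_cong[OF sum_eq, of "(phi a, phi a, phi c)"] have "L * R = L"
    using ac phi_mono by (simp add: I3_e_def)
  moreover have "(\<Sum>s\<in>{a..c}. \<Phi> (I3_e a s c) (phi a, phi c, phi c)) = R"
    using ac by (subst sum_eq_single[where a = c])
      (auto simp: R_def bij_phi bij_is_inj inj_eq dest: Phi_e_support)
  with fun_cong[OF sum_eq, of "(phi a, phi c, phi c)"] have "L * R = R"
    using ac phi_mono by (simp add: I3_e_def)
  moreover have "L \<noteq> 0"
    using Phi_e_smult[of a a c] Phi_e_neq_zero[of a a c] ac by (auto simp: L_def)
  ultimately have "L = 1" "R = 1"
    using idempotent_cases by metis+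
  then show "\<Phi> (I3_e a a c) (phi a, phi a, phi c) = 1" "\<Phi> (I3_e a c c) (phi a, phi c, phi c) = 1"
    by (simp_all add: L_def R_def)
qed

lemma Phi_e_edges:
  assumes "a \<le> c"
  shows "\<Phi> (I3_e a a c) = I3_e (phi a) (phi a) (phi c)" "\<Phi> (I3_e a c c) = I3_e (phi a) (phi c) (phi c)"
proof -
  have "\<Phi> (I3_e a a c) = I3_e (phi a) (phi a) (phi c) \<and> \<Phi> (I3_e a c c) = I3_e (phi a) (phi c) (phi c)"
  proof (cases "a = c")
    case False
    then show ?thesis
      using assms Phi_e_smult[of a a c] Phi_e_smult[of a c c] Phi_e_edge_coeffs[of a c] by simp
  qed (simp add: Phi_e_diag)
  then show "\<Phi> (I3_e a a c) = I3_e (phi a) (phi a) (phi c)" "\<Phi> (I3_e a c c) = I3_e (phi a) (phi c) (phi c)"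
    by simp_all
qed

lemma Phi_e:
  assumes "a \<le> b" "b \<le> c"
  shows "\<Phi> (I3_e a b c) = I3_e (phi a) (phi b) (phi c)"
proof -
  have "\<Phi> (I3_e a b c) = I3_mult (\<Phi> (I3_e a b b)) (\<Phi> (I3_e b b c))"
    using assms by (simp add: mult[symmetric] I3_e_in_I3 I3_mult_e_e_join)
  also have "\<dots> = I3_e (phi a) (phi b) (phi c)"
    using assms by (simp add: Phi_e_edges I3_mult_e_e_join phi_mono)
  finally show ?thesis .
qed

lemma Phi_apply_phi:
  assumes "h \<in> I3"
  shows "\<Phi> h (phi a, phi b, phi c) = h (a, b, c)"
proof -
  have "\<Phi> h (phi a, phi b, phi c) = (\<Sum>(x, y, z)\<in>chains3. h (x, y, z) * I3_e x y z (a, b, c))"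
    unfolding Phi_expansion[OF assms]
  proof (rule sum.cong)
    fix s
    assume "s \<in> (chains3 :: ('a \<times> 'a \<times> 'a) set)"
    then obtain x y z where s: "s = (x, y, z)" "x \<le> y" "y \<le> z"
      by (auto simp: chains3_def)
    have "I3_e (phi x) (phi y) (phi z) (phi a, phi b, phi c) = (I3_e x y z (a, b, c) :: 'r)"
      using bij_phi by (simp add: I3_e_def bij_is_inj inj_eq)
    then show "(case s of (x, y, z) \<Rightarrow> h (x, y, z) * \<Phi> (I3_e x y z) (phi a, phi b, phi c)) =
        (case s of (x, y, z) \<Rightarrow> h (x, y, z) * I3_e x y z (a, b, c))"
      using s by (simp add: Phi_e)
  qed simp
  also have "\<dots> = h (a, b, c)"
    by (rule I3_expansion[OF assms, symmetric])
  finally show ?thesis .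
qed

lemma phi_le_iff: "phi a \<le> phi c \<longleftrightarrow> a \<le> c"
proof
  assume "phi a \<le> phi c"
  then obtain h where h: "h \<in> I3" "\<Phi> h = I3_e (phi a) (phi a) (phi c)"
    using Phi_preimage I3_e_in_I3 by blast
  then have "h (a, a, c) = 1"
    using Phi_apply_phi[OF h(1), of a a c] by (simp add: I3_e_def)
  then show "a \<le> c"
    using I3_vanish[OF h(1), of a a c] zero_neq_one by auto
qed (rule phi_mono)

end

theorem theorem3p19:
  fixes \<Phi> :: "('a::{finite,order} \<times> 'a \<times> 'a \<Rightarrow> 'r::comm_ring_1)
               \<Rightarrow> ('b::{finite,order} \<times> 'b \<times> 'b \<Rightarrow> 'r)"
  assumes indec: "indecomposable_ring TYPE('r)"
    and bij: "bij_betw \<Phi> I3 I3"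
    and add: "\<And>f g. f \<in> I3 \<Longrightarrow> g \<in> I3 \<Longrightarrow> \<Phi> (\<lambda>t. f t + g t) = (\<lambda>t. \<Phi> f t + \<Phi> g t)"
    and smult: "\<And>r f. f \<in> I3 \<Longrightarrow> \<Phi> (\<lambda>t. r * f t) = (\<lambda>t. r * \<Phi> f t)"
    and mult: "\<And>f g. f \<in> I3 \<Longrightarrow> g \<in> I3 \<Longrightarrow> \<Phi> (I3_mult f g) = I3_mult (\<Phi> f) (\<Phi> g)"
  shows "\<exists>\<phi> :: 'a \<Rightarrow> 'b. poset_iso \<phi> \<and>
           (\<forall>x y z. x \<le> y \<and> y \<le> z \<longrightarrow> \<Phi> (I3_e x y z) = I3_e (\<phi> x) (\<phi> y) (\<phi> z))"
proof -
  interpret I3_iso \<Phi>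
    using assms by unfold_locales
  have "poset_iso phi"
    by (simp add: poset_iso_def bij_phi phi_le_iff)
  then show ?thesis
    using Phi_e by blast
qed

end
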